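(* Let $\Omega\subset\mathbb{R}^d$ be a bounded domain with smooth boundary, $T>0$, $0<\alpha<1$, and consider $$\partial_{0+}^\alpha u-\Delta u=F(x,t):=f(x)g(t) \text{ in }\Omega\times(0,T],\qquad \frac{\partial u}{\partial\nu}+\lambda(x)u=b(x,t)\text{ on }\partial\Omega\times(0,T],\qquad u(x,0)=u_0(x)\text{ in }\overline{\Omega},$$ with $u_0\in\mathcal{D}((-\Delta)^3)$, $g\in C^1[0,T]$, $f\in\mathcal{D}((-\Delta)^2)$, $b\in C^2([0,T];H^{9/2}(\partial\Omega))$. Assume $u_0\ge0$, $F\ge0$, $b\ge0$, and $0<\lambda^-<\lambda(x)\le\lambda^+$ for constants $\lambda^\pm$. If $u$ is the classical solution of this problem, then $u(x,t)\ge0$ in $\overline{\Omega}\times[0,T]$.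
   Context: $\nu$ is the outward unit normal; $\partial_{0+}^\alpha$ is the Caputo derivative $\frac{1}{\Gamma(1-\alpha)}\int_0^t\frac{\partial_\tau u(x,\tau)}{(t-\tau)^\alpha}d\tau$. $\mathcal{D}((-\Delta)^\gamma)=\{f\in L^2(\Omega):\sum_n|\mu_n^\gamma(f,\psi_n)|^2<\infty\}$, where $(\mu_n,\psi_n)$ is the $L^2$-orthonormal Robin eigensystem $-\Delta\psi_n=\mu_n\psi_n$, $\partial_\nu\psi_n+\lambda\psi_n=0$. A classical solution is a solution in $C(\overline{\Omega}\times[0,T])$ such that for every $x\in\Omega$, $u(x,\cdot)\in C^1(0,T]$ with $\partial_tu(x,\cdot)\in L^1(0,T)$, and for every $t\in(0,T]$, $u(\cdot,t)\in C^2(\Omega)$. *)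

theory Defs
  imports "HOL-Analysis.Analysis"
begin

fun pd :: "'a list \<Rightarrow> ('a::euclidean_space \<Rightarrow> real) \<Rightarrow> 'a \<Rightarrow> real" where
  "pd [] f = f"
| "pd (v # vs) f = (\<lambda>x. deriv (\<lambda>s. pd vs f (x + s *\<^sub>R v)) 0)"

definition Ck_on :: "nat \<Rightarrow> 'a set \<Rightarrow> ('a::euclidean_space \<Rightarrow> real) \<Rightarrow> bool" where
  "Ck_on k S f \<longleftrightarrow>
     (\<forall>vs. set vs \<subseteq> Basis \<and> length vs \<le> k \<longrightarrow>
        continuous_on S (pd vs f) \<and>
        (length vs < k \<longrightarrow>
           (\<forall>v\<in>Basis. \<forall>x\<in>S. (\<lambda>s. pd vs f (x + s *\<^sub>R v)) differentiable (at 0))))"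

definition smooth_on :: "'a set \<Rightarrow> ('a::euclidean_space \<Rightarrow> real) \<Rightarrow> bool" where
  "smooth_on S f \<longleftrightarrow> (\<forall>k. Ck_on k S f)"

definition grad :: "('a::euclidean_space \<Rightarrow> real) \<Rightarrow> 'a \<Rightarrow> 'a" where
  "grad f x = (\<Sum>i\<in>Basis. pd [i] f x *\<^sub>R i)"

definition laplacian :: "('a::euclidean_space \<Rightarrow> real) \<Rightarrow> 'a \<Rightarrow> real" where
  "laplacian f x = (\<Sum>i\<in>Basis. pd [i, i] f x)"

definition defining_function :: "'a set \<Rightarrow> ('a::euclidean_space \<Rightarrow> real) \<Rightarrow> bool" where
  "defining_function \<Omega> \<phi> \<longleftrightarrow>
     smooth_on UNIV \<phi> \<and> \<Omega> = {x. \<phi> x < 0} \<and> (\<forall>x. \<phi> x = 0 \<longrightarrow> grad \<phi> x \<noteq> 0)"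

definition smooth_bounded_domain :: "'a::euclidean_space set \<Rightarrow> bool" where
  "smooth_bounded_domain \<Omega> \<longleftrightarrow>
     open \<Omega> \<and> connected \<Omega> \<and> bounded \<Omega> \<and> \<Omega> \<noteq> {} \<and> (\<exists>\<phi>. defining_function \<Omega> \<phi>)"

text \<open>Outward unit normal (independent of the choice of defining function).\<close>
definition outward_normal :: "'a set \<Rightarrow> 'a \<Rightarrow> 'a::euclidean_space" where
  "outward_normal \<Omega> x =
     (let \<phi> = (SOME \<phi>. defining_function \<Omega> \<phi>) in grad \<phi> x /\<^sub>R norm (grad \<phi> x))"

definition has_normal_derivative :: "'a set \<Rightarrow> ('a::euclidean_space \<Rightarrow> real) \<Rightarrow> 'a \<Rightarrow> real \<Rightarrow> bool" where
  "has_normal_derivative \<Omega> w x D \<longleftrightarrow>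
     ((\<lambda>h. (w x - w (x - h *\<^sub>R outward_normal \<Omega> x)) / h) \<longlongrightarrow> D) (at_right 0)"

definition caputo :: "real \<Rightarrow> (real \<Rightarrow> real) \<Rightarrow> real \<Rightarrow> real" where
  "caputo \<alpha> w t =
     set_lebesgue_integral lborel {0<..<t} (\<lambda>\<tau>. deriv w \<tau> / (t - \<tau>) powr \<alpha>) / Gamma (1 - \<alpha>)"

definition C1_closed_interval :: "real \<Rightarrow> (real \<Rightarrow> real) \<Rightarrow> bool" where
  "C1_closed_interval T g \<longleftrightarrow>
     (\<exists>g'. (\<forall>t\<in>{0..T}. (g has_real_derivative g' t) (at t within {0..T})) \<and> continuous_on {0..T} g')"

definition L2 :: "'a::euclidean_space set \<Rightarrow> ('a \<Rightarrow> real) \<Rightarrow> bool" where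
  "L2 \<Omega> f \<longleftrightarrow> f \<in> borel_measurable (lebesgue_on \<Omega>) \<and> integrable (lebesgue_on \<Omega>) (\<lambda>x. (f x)\<^sup>2)"

definition L2_inner :: "'a::euclidean_space set \<Rightarrow> ('a \<Rightarrow> real) \<Rightarrow> ('a \<Rightarrow> real) \<Rightarrow> real" where
  "L2_inner \<Omega> f h = (LINT x|lebesgue_on \<Omega>. f x * h x)"

definition robin_eigensystem ::
  "'a::euclidean_space set \<Rightarrow> ('a \<Rightarrow> real) \<Rightarrow> (nat \<Rightarrow> real) \<Rightarrow> (nat \<Rightarrow> 'a \<Rightarrow> real) \<Rightarrow> bool" where
  "robin_eigensystem \<Omega> lam \<mu> \<psi> \<longleftrightarrow>
     (\<forall>n. Ck_on 2 \<Omega> (\<psi> n) \<and> continuous_on (closure \<Omega>) (\<psi> n) \<and> L2 \<Omega> (\<psi> n) \<and>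
          (\<forall>x\<in>\<Omega>. - laplacian (\<psi> n) x = \<mu> n * \<psi> n x) \<and>
          (\<forall>x\<in>frontier \<Omega>. \<exists>D. has_normal_derivative \<Omega> (\<psi> n) x D \<and> D + lam x * \<psi> n x = 0)) \<and>
     (\<forall>m n. L2_inner \<Omega> (\<psi> m) (\<psi> n) = (if m = n then 1 else 0)) \<and>
     (\<forall>f. L2 \<Omega> f \<longrightarrow> (\<lambda>n. (L2_inner \<Omega> f (\<psi> n))\<^sup>2) sums (LINT x|lebesgue_on \<Omega>. (f x)\<^sup>2)) \<and>
     mono \<mu>"

text \<open>D((-Delta)^gamma) with respect to the Robin eigensystem.\<close>
definition frac_domain ::
  "'a::euclidean_space set \<Rightarrow> (nat \<Rightarrow> real) \<Rightarrow> (nat \<Rightarrow> 'a \<Rightarrow> real) \<Rightarrow> real \<Rightarrow> ('a \<Rightarrow> real) \<Rightarrow> bool" where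
  "frac_domain \<Omega> \<mu> \<psi> \<gamma> f \<longleftrightarrow>
     L2 \<Omega> f \<and> summable (\<lambda>n. (\<mu> n powr \<gamma> * L2_inner \<Omega> f (\<psi> n))\<^sup>2)"

definition classical_solution ::
  "'a::euclidean_space set \<Rightarrow> real \<Rightarrow> real \<Rightarrow> ('a \<Rightarrow> real) \<Rightarrow> ('a \<Rightarrow> real) \<Rightarrow> (real \<Rightarrow> real)
   \<Rightarrow> ('a \<Rightarrow> real \<Rightarrow> real) \<Rightarrow> ('a \<Rightarrow> real) \<Rightarrow> ('a \<Rightarrow> real \<Rightarrow> real) \<Rightarrow> bool" where
  "classical_solution \<Omega> T \<alpha> lam f g b u0 u \<longleftrightarrow>
     continuous_on (closure \<Omega> \<times> {0..T}) (\<lambda>(x, t). u x t) \<and>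
     (\<forall>x\<in>\<Omega>. (\<exists>w'. (\<forall>t\<in>{0<..T}. (u x has_real_derivative w' t) (at t within {0<..T})) \<and>
                    continuous_on {0<..T} w') \<and>
              set_integrable lborel {0<..<T} (deriv (u x))) \<and>
     (\<forall>t\<in>{0<..T}. Ck_on 2 \<Omega> (\<lambda>y. u y t)) \<and>
     (\<forall>x\<in>\<Omega>. \<forall>t\<in>{0<..T}. caputo \<alpha> (u x) t - laplacian (\<lambda>y. u y t) x = f x * g t) \<and>
     (\<forall>x\<in>frontier \<Omega>. \<forall>t\<in>{0<..T}.
        \<exists>D. has_normal_derivative \<Omega> (\<lambda>y. u y t) x D \<and> D + lam x * u x t = b x t) \<and>
     (\<forall>x\<in>closure \<Omega>. u x 0 = u0 x)"

end

theory Submission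
  imports Defs
begin

text \<open>
  Fix \<open>\<epsilon> > 0\<close> and let \<open>w = u + \<epsilon> t\<close> attain its minimum over the compact set
  \<open>closure \<Omega> \<times> [0, T]\<close> at \<open>(x\<^sub>0, t\<^sub>0)\<close>; it suffices that \<open>u(x\<^sub>0, t\<^sub>0) \<ge> 0\<close>, and then \<open>\<epsilon> \<rightarrow> 0\<close>.
  For \<open>t\<^sub>0 = 0\<close> this is \<open>u\<^sub>0 \<ge> 0\<close>. An interior point \<open>x\<^sub>0 \<in> \<Omega>\<close> with \<open>t\<^sub>0 > 0\<close> cannot occur:
  there \<open>\<Delta>u \<ge> 0\<close>, while \<open>u(x\<^sub>0, \<cdot>)\<close> decreases towards \<open>t\<^sub>0\<close> at rate at least \<open>\<epsilon>\<close>, which after an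
  integration by parts against the kernel \<open>(t\<^sub>0 - \<tau>)\<^sup>-\<^sup>\<alpha>\<close> makes the Caputo derivative strictly
  negative, contradicting \<open>\<partial>\<^sup>\<alpha>u - \<Delta>u = F \<ge> 0\<close>. At a boundary point the inward difference
  quotients are nonnegative, so \<open>\<partial>\<^sub>\<nu>u \<le> 0\<close> and the Robin condition gives \<open>\<lambda> u = b - \<partial>\<^sub>\<nu>u \<ge> 0\<close>.
\<close>

section \<open>The Caputo derivative at a past minimum\<close>

lemma deriv_eq_if_has_real_derivative_within_interior:
  assumes "(f has_real_derivative D) (at x within S)" "x \<in> interior S"
  shows "deriv f x = D"
  using assms by (metis DERIV_imp_deriv at_within_interior)

lemma absolutely_integrable_imp_set_integrable_lborel:
  fixes f :: "'a::euclidean_space \<Rightarrow> real"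
  assumes "f absolutely_integrable_on S" "(\<lambda>x. indicator S x * f x) \<in> borel_measurable borel"
  shows "set_integrable lborel S f"
  using assms unfolding set_integrable_def by (simp add: integrable_completion)

lemma caputo_kernel_absolutely_integrable:
  fixes \<alpha> s t :: real
  assumes "\<alpha> < 1"
  shows "(\<lambda>\<tau>. (t - \<tau>) powr (-\<alpha>)) absolutely_integrable_on {s..t}"
proof (cases "s \<le> t")
  case True
  have "(\<lambda>\<tau>. \<tau> powr (-\<alpha>)) integrable_on cbox 0 (t - s)"
    using integrable_on_powr_from_0[of "-\<alpha>" "t - s"] assms True by simp
  from integrable_affinity[OF this, of "-1" t]
  have "(\<lambda>\<tau>. (t - \<tau>) powr (-\<alpha>)) integrable_on {s..t}" by simp
  then show ?thesis by (subst absolutely_integrable_on_iff_nonneg) auto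
qed simp

lemma absolutely_integrable_continuous_mult:
  fixes f g :: "real \<Rightarrow> real"
  assumes "f absolutely_integrable_on S" "continuous_on C g" "compact C" "S \<subseteq> C" "S \<in> sets lebesgue"
  shows "(\<lambda>x. g x * f x) absolutely_integrable_on S"
proof (rule absolutely_integrable_bounded_measurable_product_real)
  show "g \<in> borel_measurable (lebesgue_on S)"
    using assms by (intro continuous_imp_measurable_on_sets_lebesgue continuous_on_subset[OF assms(2)])
  show "bounded (g ` S)"
    using compact_imp_bounded[OF compact_continuous_image[OF assms(2,3)]] assms(4)
    by (meson bounded_subset image_mono)
qed (use assms in auto)

lemma caputo_integrand_absolutely_integrable:
  fixes v v' :: "real \<Rightarrow> real"
  assumes "\<alpha> < 1" "0 < t" "t \<le> T"
    and der: "\<And>\<tau>. \<tau> \<in> {0<..T} \<Longrightarrow> (v has_real_derivative v' \<tau>) (at \<tau> within {0<..T})"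
    and cont: "continuous_on {0<..T} v'"
    and int: "deriv v absolutely_integrable_on {0<..<T}"
  shows "(\<lambda>\<tau>. deriv v \<tau> / (t - \<tau>) powr \<alpha>) absolutely_integrable_on {0<..<t}"
proof -
  define k where "k \<tau> = (t - \<tau>) powr (-\<alpha>)" for \<tau>
  have integrand_eq: "deriv v \<tau> / (t - \<tau>) powr \<alpha> = k \<tau> * deriv v \<tau>" if "\<tau> < t" for \<tau>
    using that by (simp add: k_def powr_minus_divide)
  have dv: "deriv v \<tau> = v' \<tau>" if "0 < \<tau>" "\<tau> < T" for \<tau>
    using deriv_eq_if_has_real_derivative_within_interior[OF der] that by auto
  have "deriv v absolutely_integrable_on {0<..t/2}"
    by (rule set_integrable_subset[OF int]) (use assms in auto)
  moreover have "continuous_on {0..t/2} k"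
    unfolding k_def using \<open>0 < t\<close> by (intro continuous_intros) auto
  ultimately have prod_left: "(\<lambda>\<tau>. k \<tau> * deriv v \<tau>) absolutely_integrable_on {0<..t/2}"
    by (rule absolutely_integrable_continuous_mult) auto
  have "k absolutely_integrable_on {t/2..<t}"
    unfolding k_def
    by (rule set_integrable_subset[OF caputo_kernel_absolutely_integrable[OF \<open>\<alpha> < 1\<close>, of "t/2" t]]) auto
  moreover have "continuous_on {t/2..t} v'"
    by (rule continuous_on_subset[OF cont]) (use assms in auto)
  ultimately have prod_right: "(\<lambda>\<tau>. v' \<tau> * k \<tau>) absolutely_integrable_on {t/2..<t}"
    by (rule absolutely_integrable_continuous_mult) auto
  have "deriv v \<tau> / (t - \<tau>) powr \<alpha> = k \<tau> * deriv v \<tau>" if "\<tau> \<in> {0<..t/2}" for \<tau>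
    using that \<open>0 < t\<close> by (intro integrand_eq) simp
  then have "(\<lambda>\<tau>. deriv v \<tau> / (t - \<tau>) powr \<alpha>) absolutely_integrable_on {0<..t/2}"
    by (rule set_integrable_cong[THEN iffD2, OF refl refl _ prod_left])
  moreover have "deriv v \<tau> / (t - \<tau>) powr \<alpha> = v' \<tau> * k \<tau>" if "\<tau> \<in> {t/2..<t}" for \<tau>
  proof -
    have "0 < \<tau>" "\<tau> < T" "\<tau> < t" using that \<open>0 < t\<close> \<open>t \<le> T\<close> by auto
    then show ?thesis using integrand_eq dv by (metis mult.commute)
  qed
  then have "(\<lambda>\<tau>. deriv v \<tau> / (t - \<tau>) powr \<alpha>) absolutely_integrable_on {t/2..<t}"
    by (rule set_integrable_cong[THEN iffD2, OF refl refl _ prod_right])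
  ultimately have "(\<lambda>\<tau>. deriv v \<tau> / (t - \<tau>) powr \<alpha>) absolutely_integrable_on ({0<..t/2} \<union> {t/2..<t})"
    by (rule absolutely_integrable_Un)
  moreover have "{0<..t/2} \<union> {t/2..<t} = {0<..<t}" using \<open>0 < t\<close> by auto
  ultimately show ?thesis by simp
qed

lemma caputo_integrand_set_integrable:
  fixes v v' :: "real \<Rightarrow> real"
  assumes "\<alpha> < 1" "0 < t" "t \<le> T"
    and der: "\<And>\<tau>. \<tau> \<in> {0<..T} \<Longrightarrow> (v has_real_derivative v' \<tau>) (at \<tau> within {0<..T})"
    and cont: "continuous_on {0<..T} v'"
    and int: "set_integrable lborel {0<..<T} (deriv v)"
  shows "set_integrable lborel {0<..<t} (\<lambda>\<tau>. deriv v \<tau> / (t - \<tau>) powr \<alpha>)"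
proof (rule absolutely_integrable_imp_set_integrable_lborel)
  have m_int: "(\<lambda>\<tau>. indicator {0<..<T} \<tau> *\<^sub>R deriv v \<tau>) \<in> borel_measurable lborel"
    using int unfolding set_integrable_def by (rule borel_measurable_integrable)
  then have "deriv v absolutely_integrable_on {0<..<T}"
    using int unfolding set_integrable_def by (simp add: integrable_completion)
  then show "(\<lambda>\<tau>. deriv v \<tau> / (t - \<tau>) powr \<alpha>) absolutely_integrable_on {0<..<t}"
    using caputo_integrand_absolutely_integrable[OF assms(1-3) der cont] by blast
  have "(\<lambda>\<tau>. indicator {0<..<t} \<tau> *\<^sub>R (1 / (t - \<tau>) powr \<alpha>)) \<in> borel_measurable borel"
    by (rule borel_measurable_continuous_on_indicator) (auto intro!: continuous_intros)
  moreover have "(\<lambda>\<tau>. indicator {0<..<t} \<tau> * (deriv v \<tau> / (t - \<tau>) powr \<alpha>))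
      = (\<lambda>\<tau>. (indicator {0<..<T} \<tau> *\<^sub>R deriv v \<tau>) * (indicator {0<..<t} \<tau> *\<^sub>R (1 / (t - \<tau>) powr \<alpha>)))"
    using \<open>t \<le> T\<close> by (auto simp: indicator_def fun_eq_iff)
  ultimately show "(\<lambda>\<tau>. indicator {0<..<t} \<tau> * (deriv v \<tau> / (t - \<tau>) powr \<alpha>)) \<in> borel_measurable borel"
    using m_int by simp
qed

lemma has_real_derivative_caputo_kernel:
  fixes \<alpha> t \<tau> :: real
  assumes "\<tau> < t"
  shows "((\<lambda>\<tau>. (t - \<tau>) powr (-\<alpha>)) has_real_derivative \<alpha> * (t - \<tau>) powr (-\<alpha> - 1)) (at \<tau> within S)"
proof -
  have "((\<lambda>\<tau>. (t - \<tau>) powr (-\<alpha>)) has_real_derivative (-\<alpha>) * (t - \<tau>) powr (-\<alpha> - of_nat 1) * (-1)) (at \<tau>)"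
    by (rule DERIV_fun_powr) (use assms in \<open>auto intro!: derivative_eq_intros\<close>)
  then show ?thesis by (auto intro: has_field_derivative_at_within)
qed

lemma integral_caputo_kernel_le:
  fixes v v' :: "real \<Rightarrow> real"
  assumes "0 < \<alpha>" "0 \<le> a" "a < b" "b < t" "0 \<le> \<epsilon>"
    and der: "\<And>\<tau>. \<tau> \<in> {a..b} \<Longrightarrow> (v has_real_derivative v' \<tau>) (at \<tau> within {a..b})"
    and grow: "\<And>\<tau>. \<tau> \<in> {a..b} \<Longrightarrow> v t + \<epsilon> * (t - \<tau>) \<le> v \<tau>"
  shows "integral {a..b} (\<lambda>\<tau>. v' \<tau> * (t - \<tau>) powr (-\<alpha>))
     \<le> (v b - v t) * (t - b) powr (-\<alpha>) - \<alpha> * \<epsilon> * t powr (-\<alpha>) * (b - a)"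
proof -
  define P where "P \<tau> = (v \<tau> - v t) * (t - \<tau>) powr (-\<alpha>)" for \<tau>
  define Q where "Q \<tau> = \<alpha> * (t - \<tau>) powr (-\<alpha> - 1) * (v \<tau> - v t)" for \<tau>
  define c where "c = \<alpha> * \<epsilon> * t powr (-\<alpha>)"
  have dk: "((\<lambda>\<tau>. (t - \<tau>) powr (-\<alpha>)) has_real_derivative \<alpha> * (t - \<tau>) powr (-\<alpha> - 1)) (at \<tau> within {a..b})"
    if "\<tau> \<in> {a..b}" for \<tau>
    using that assms by (intro has_real_derivative_caputo_kernel) auto
  \<comment> \<open>Integration by parts: \<open>v' k = P' - Q\<close> for \<open>k \<tau> = (t - \<tau>) powr (-\<alpha>)\<close>, and \<open>c \<le> Q\<close> by growth.\<close>
  have "(P has_real_derivative (v' \<tau> - 0) * (t - \<tau>) powr (-\<alpha>) + Q \<tau>) (at \<tau> within {a..b})"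
    if "\<tau> \<in> {a..b}" for \<tau>
    unfolding P_def[abs_def] Q_def by (intro DERIV_mult DERIV_diff der that DERIV_const dk)
  then have ftc: "((\<lambda>\<tau>. v' \<tau> * (t - \<tau>) powr (-\<alpha>) + Q \<tau>) has_integral (P b - P a)) {a..b}"
    using assms by (intro fundamental_theorem_of_calculus)
      (auto simp: has_real_derivative_iff_has_vector_derivative[symmetric])
  have "continuous_on {a..b} Q"
    unfolding Q_def using assms
    by (intro continuous_intros DERIV_continuous_on[OF der]) auto
  then obtain J where J: "(Q has_integral J) {a..b}"
    using integrable_continuous_interval by blast
  have "c \<le> Q \<tau>" if "\<tau> \<in> {a..b}" for \<tau>
  proof -
    have pos: "t - \<tau> > 0" using that assms by auto
    have kernel_eq: "(t - \<tau>) powr (-\<alpha>) = (t - \<tau>) * (t - \<tau>) powr (-\<alpha> - 1)"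
      using pos by (simp add: powr_diff powr_minus field_simps)
    have "c \<le> \<alpha> * \<epsilon> * (t - \<tau>) powr (-\<alpha>)"
      unfolding c_def using assms pos that by (intro mult_left_mono powr_mono2') auto
    also have "\<dots> = \<alpha> * (t - \<tau>) powr (-\<alpha> - 1) * (\<epsilon> * (t - \<tau>))"
      unfolding kernel_eq by (simp add: mult_ac)
    also have "\<dots> \<le> Q \<tau>"
      unfolding Q_def using grow[OF that] assms by (intro mult_left_mono) auto
    finally show ?thesis .
  qed
  then have "c * (b - a) \<le> J"
    using has_integral_le[OF has_integral_const_real J, of c] \<open>a < b\<close> by (simp add: mult.commute)
  moreover have "integral {a..b} (\<lambda>\<tau>. v' \<tau> * (t - \<tau>) powr (-\<alpha>)) = P b - P a - J"
    using has_integral_diff[OF ftc J] by (simp add: integral_unique)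
  moreover have "0 \<le> P a"
  proof -
    have "0 \<le> \<epsilon> * (t - a)" using assms by simp
    then have "v t \<le> v a" using grow[of a] \<open>a < b\<close> by auto
    then show ?thesis unfolding P_def by simp
  qed
  ultimately show ?thesis unfolding P_def c_def by linarith
qed

lemma difference_times_powr_tendsto_0:
  fixes v :: "real \<Rightarrow> real"
  assumes der: "(v has_real_derivative D) (at t within {s..t})" and "s < t" "\<alpha> < 1"
  shows "((\<lambda>h. (v (t - h) - v t) * h powr (-\<alpha>)) \<longlongrightarrow> 0) (at_right 0)"
proof -
  have "filterlim (\<lambda>h. t - h) (at t within {s..t}) (at_right 0)"
    unfolding filterlim_at
  proof
    show "\<forall>\<^sub>F h in at_right 0. t - h \<in> {s..t} \<and> t - h \<noteq> t"
      using \<open>s < t\<close> by (auto simp: eventually_at_right_field intro!: exI[of _ "t - s"])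
    show "((\<lambda>h. t - h) \<longlongrightarrow> t) (at_right 0)"
      by (auto intro!: tendsto_eq_intros)
  qed
  from filterlim_compose[OF der[unfolded has_field_derivative_iff] this]
  have "((\<lambda>h. (v (t - h) - v t) / (- h)) \<longlongrightarrow> D) (at_right 0)" by simp
  moreover have "((\<lambda>h. h powr (1 - \<alpha>)) \<longlongrightarrow> 0) (at_right 0)"
    using \<open>\<alpha> < 1\<close> eventually_at_right_less[of "0::real"]
    by (intro tendsto_zero_powrI tendsto_ident_at tendsto_const) (auto elim: eventually_mono)
  ultimately have "((\<lambda>h. - ((v (t - h) - v t) / (- h)) * h powr (1 - \<alpha>)) \<longlongrightarrow> - D * 0) (at_right 0)"
    by (intro tendsto_mult tendsto_minus)
  moreover have "\<forall>\<^sub>F h in at_right 0. - ((v (t - h) - v t) / (- h)) * h powr (1 - \<alpha>) = (v (t - h) - v t) * h powr (-\<alpha>)"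
    using eventually_at_right_less[of 0]
    by eventually_elim (simp add: powr_diff powr_minus field_simps)
  ultimately show ?thesis by (simp add: tendsto_cong)
qed

lemma tendsto_integral_shrinking_interval:
  fixes f :: "real \<Rightarrow> 'a::banach"
  assumes f: "f integrable_on {a..b}" and "a < b"
  shows "((\<lambda>h. integral {a + h..b - h} f) \<longlongrightarrow> integral {a..b} f) (at_right 0)"
proof -
  define \<Phi> where "\<Phi> x = integral {a..x} f" for x
  have \<Phi>_cont: "continuous_on {a..b} \<Phi>"
    unfolding \<Phi>_def by (rule indefinite_integral_continuous_1[OF f])
  have "filterlim (\<lambda>h. b - h) (at_left b) (at_right 0)"
    unfolding filterlim_at using eventually_at_right_less[of "0::real"]
    by (auto elim: eventually_mono intro!: tendsto_eq_intros)
  with continuous_on_Icc_at_leftD[OF \<Phi>_cont \<open>a < b\<close>]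
  have "((\<lambda>h. \<Phi> (b - h)) \<longlongrightarrow> \<Phi> b) (at_right 0)"
    by (rule filterlim_compose)
  moreover have "filterlim (\<lambda>h. a + h) (at_right a) (at_right 0)"
    unfolding filterlim_at using eventually_at_right_less[of "0::real"]
    by (auto elim: eventually_mono intro!: tendsto_eq_intros)
  with continuous_on_Icc_at_rightD[OF \<Phi>_cont \<open>a < b\<close>]
  have "((\<lambda>h. \<Phi> (a + h)) \<longlongrightarrow> \<Phi> a) (at_right 0)"
    by (rule filterlim_compose)
  ultimately have "((\<lambda>h. \<Phi> (b - h) - \<Phi> (a + h)) \<longlongrightarrow> integral {a..b} f) (at_right 0)"
    using tendsto_diff by (fastforce simp: \<Phi>_def)
  moreover have "\<forall>\<^sub>F h in at_right 0. \<Phi> (b - h) - \<Phi> (a + h) = integral {a + h..b - h} f"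
    unfolding eventually_at_right_field
  proof (intro exI[of _ "(b - a) / 2"] conjI allI impI)
    fix h :: real assume "0 < h" "h < (b - a) / 2"
    then have "integral {a..a + h} f + integral {a + h..b - h} f = integral {a..b - h} f"
      by (intro Henstock_Kurzweil_Integration.integral_combine integrable_subinterval_real[OF f]) auto
    then show "\<Phi> (b - h) - \<Phi> (a + h) = integral {a + h..b - h} f"
      unfolding \<Phi>_def by (metis add_diff_cancel_left')
  qed (use \<open>a < b\<close> in simp)
  ultimately show ?thesis by (simp add: tendsto_cong)
qed

lemma caputo_neg_at_strict_past_minimum:
  fixes v v' :: "real \<Rightarrow> real"
  assumes "0 < \<alpha>" "\<alpha> < 1" "0 < t" "t \<le> T" "0 < \<epsilon>"
    and der: "\<And>\<tau>. \<tau> \<in> {0<..T} \<Longrightarrow> (v has_real_derivative v' \<tau>) (at \<tau> within {0<..T})"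
    and cont: "continuous_on {0<..T} v'"
    and int: "set_integrable lborel {0<..<T} (deriv v)"
    and past_min: "\<And>\<tau>. \<tau> \<in> {0<..<t} \<Longrightarrow> v t + \<epsilon> * (t - \<tau>) \<le> v \<tau>"
  shows "caputo \<alpha> v t < 0"
proof -
  define G where "G \<tau> = deriv v \<tau> / (t - \<tau>) powr \<alpha>" for \<tau>
  define c where "c = \<alpha> * \<epsilon> * t powr (-\<alpha>)"
  have G_int: "set_integrable lborel {0<..<t} G"
    unfolding G_def using caputo_integrand_set_integrable[OF _ _ _ der cont int] assms by blast
  then have G_HK: "G integrable_on {0..t}"
    using set_borel_integral_eq_integral(1) integrable_on_open_interval_real by blast
  have caputo_eq: "caputo \<alpha> v t = integral {0..t} G / Gamma (1 - \<alpha>)"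
    using set_borel_integral_eq_integral(2)[OF G_int]
    by (simp add: caputo_def G_def integral_open_interval_real)
  \<comment> \<open>Integration by parts needs compact subintervals of \<open>(0, t)\<close>: approximate by \<open>[h, t - h]\<close>.\<close>
  have "((\<lambda>h. integral {0 + h..t - h} G) \<longlongrightarrow> integral {0..t} G) (at_right 0)"
    by (rule tendsto_integral_shrinking_interval[OF G_HK \<open>0 < t\<close>])
  moreover have "\<forall>\<^sub>F h in at_right 0. integral {0 + h..t - h} G
      \<le> (v (t - h) - v t) * h powr (-\<alpha>) - c * (t - 2 * h)"
    unfolding eventually_at_right_field
  proof (intro exI[of _ "t / 2"] conjI allI impI)
    fix h :: real assume h: "0 < h" "h < t / 2"
    have "integral {0 + h..t - h} G = integral {h..t - h} (\<lambda>\<tau>. v' \<tau> * (t - \<tau>) powr (-\<alpha>))"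
      using h assms
      by (simp, intro integral_cong)
        (simp add: G_def powr_minus_divide deriv_eq_if_has_real_derivative_within_interior[OF der])
    also have "\<dots> \<le> (v (t - h) - v t) * (t - (t - h)) powr (-\<alpha>) - c * ((t - h) - h)"
      unfolding c_def
    proof (rule integral_caputo_kernel_le)
      show "(v has_real_derivative v' \<tau>) (at \<tau> within {h..t - h})" if "\<tau> \<in> {h..t - h}" for \<tau>
        by (rule has_field_derivative_subset[OF der]) (use that h assms in auto)
      show "v t + \<epsilon> * (t - \<tau>) \<le> v \<tau>" if "\<tau> \<in> {h..t - h}" for \<tau>
        using past_min that h by auto
    qed (use h assms in auto)
    finally show "integral {0 + h..t - h} G \<le> (v (t - h) - v t) * h powr (-\<alpha>) - c * (t - 2 * h)"
      by (simp add: algebra_simps)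
  qed (use \<open>0 < t\<close> in simp)
  moreover have "((\<lambda>h. (v (t - h) - v t) * h powr (-\<alpha>) - c * (t - 2 * h)) \<longlongrightarrow> 0 - c * (t - 2 * 0)) (at_right 0)"
    using assms
    by (intro tendsto_intros difference_times_powr_tendsto_0[of v "v' t" t "t / 2"]
        has_field_derivative_subset[OF der]) auto
  ultimately have "integral {0..t} G \<le> - c * t"
    by (simp add: tendsto_le[OF trivial_limit_at_right_real])
  moreover have "0 < c * t" unfolding c_def using assms by simp
  ultimately show ?thesis using assms by (simp add: caputo_eq divide_neg_pos)
qed

section \<open>Minima in the interior and on the boundary of a smooth domain\<close>

lemma second_derivative_nonneg_at_local_min:
  fixes h H :: "real \<Rightarrow> real"
  assumes "0 < d" and dh: "\<And>s. \<bar>s\<bar> < d \<Longrightarrow> (h has_real_derivative H s) (at s)"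
    and dH: "(H has_real_derivative H2) (at 0)"
    and min: "\<And>s. \<bar>s\<bar> < d \<Longrightarrow> h 0 \<le> h s"
  shows "0 \<le> H2"
proof (rule ccontr)
  assume "\<not> 0 \<le> H2"
  then obtain e where "0 < e" and H_dec: "\<And>s. 0 < s \<Longrightarrow> s < e \<Longrightarrow> H s < H 0"
    using DERIV_neg_dec_right[OF dH] by force
  have "H 0 = 0"
    by (rule DERIV_local_min[OF dh[of 0] \<open>0 < d\<close>]) (use min \<open>0 < d\<close> in auto)
  define s where "s = min e d / 2"
  have s: "0 < s" "s < e" "s < d" using \<open>0 < e\<close> \<open>0 < d\<close> by (auto simp: s_def)
  obtain z where z: "0 < z" "z < s" "h s - h 0 = (s - 0) * H z"
    using MVT2[of 0 s h H] s dh by auto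
  have "H z < 0" using H_dec[of z] z s \<open>H 0 = 0\<close> by simp
  then have "s * H z < 0" using s(1) by (simp add: mult_pos_neg)
  then have "h s < h 0" using z(3) by simp
  with min[of s] s show False by simp
qed

lemma Ck_on_pd_continuous_on:
  assumes "Ck_on k S f" "set vs \<subseteq> Basis" "length vs \<le> k"
  shows "continuous_on S (pd vs f)"
  using assms unfolding Ck_on_def by blast

lemma Ck_on_pd_differentiable_along:
  assumes "Ck_on k S f" "set vs \<subseteq> Basis" "length vs < k" "v \<in> Basis" "x \<in> S"
  shows "(\<lambda>s. pd vs f (x + s *\<^sub>R v)) differentiable (at 0)"
  using assms unfolding Ck_on_def by (meson less_imp_le)

lemma has_real_derivative_along_line:
  fixes f :: "'a::euclidean_space \<Rightarrow> real"
  assumes "(\<lambda>r. f ((y + s *\<^sub>R v) + r *\<^sub>R v)) differentiable (at 0)"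
  shows "((\<lambda>s. f (y + s *\<^sub>R v)) has_real_derivative pd [v] f (y + s *\<^sub>R v)) (at s)"
proof -
  have "((\<lambda>r. f ((y + s *\<^sub>R v) + r *\<^sub>R v)) has_real_derivative pd [v] f (y + s *\<^sub>R v)) (at 0)"
    using assms by (simp add: DERIV_deriv_iff_real_differentiable)
  moreover have "(\<lambda>r. f ((y + s *\<^sub>R v) + r *\<^sub>R v)) = (\<lambda>r. f (y + (r + s) *\<^sub>R v))"
    by (simp add: algebra_simps scaleR_add_left)
  ultimately show ?thesis using DERIV_shift[of "\<lambda>s. f (y + s *\<^sub>R v)" _ 0 s] by simp
qed

lemma laplacian_nonneg_at_min:
  fixes U :: "'a::euclidean_space \<Rightarrow> real"
  assumes "open \<Omega>" "x \<in> \<Omega>" "Ck_on 2 \<Omega> U" and min: "\<And>y. y \<in> \<Omega> \<Longrightarrow> U x \<le> U y"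
  shows "0 \<le> laplacian U x"
  unfolding laplacian_def
proof (rule sum_nonneg)
  fix i :: 'a assume i: "i \<in> Basis"
  obtain d where "0 < d" "ball x d \<subseteq> \<Omega>" using assms(1,2) open_contains_ball by blast
  then have line: "x + s *\<^sub>R i \<in> \<Omega>" if "\<bar>s\<bar> < d" for s
    using that i by (auto simp: dist_norm)
  have "((\<lambda>s. U (x + s *\<^sub>R i)) has_real_derivative pd [i] U (x + s *\<^sub>R i)) (at s)"
    if "\<bar>s\<bar> < d" for s
    using Ck_on_pd_differentiable_along[OF assms(3), of "[]" i] line[OF that] i
    by (intro has_real_derivative_along_line) simp
  moreover have "((\<lambda>s. pd [i] U (x + s *\<^sub>R i)) has_real_derivative pd [i, i] U x) (at 0)"
    using Ck_on_pd_differentiable_along[OF assms(3), of "[i]" i x] i assms(2)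
    by (simp add: DERIV_deriv_iff_real_differentiable)
  ultimately show "0 \<le> pd [i, i] U x"
    by (rule second_derivative_nonneg_at_local_min[OF \<open>0 < d\<close>]) (use min line in auto)
qed

lemma mean_value_along_basis:
  fixes \<phi> :: "'a::euclidean_space \<Rightarrow> real"
  assumes diff: "\<And>x. (\<lambda>s. \<phi> (x + s *\<^sub>R v)) differentiable (at 0)" and "v \<in> Basis"
  obtains z where "dist z y \<le> \<bar>c\<bar>" "\<phi> (y + c *\<^sub>R v) - \<phi> y = c * pd [v] \<phi> z"
proof -
  have "((\<lambda>s. \<phi> (y + s *\<^sub>R v)) has_real_derivative pd [v] \<phi> (y + r *\<^sub>R v)) (at r)" for r
    using diff by (intro has_real_derivative_along_line) blast
  then have d: "((\<lambda>s. \<phi> (y + (c * s) *\<^sub>R v)) has_real_derivative pd [v] \<phi> (y + (c * s) *\<^sub>R v) * c) (at s)" for s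
    by (rule DERIV_chain2) (auto intro!: derivative_eq_intros)
  obtain s where "0 < s" "s < 1"
    and "\<phi> (y + (c * 1) *\<^sub>R v) - \<phi> (y + (c * 0) *\<^sub>R v) = (1 - 0) * (pd [v] \<phi> (y + (c * s) *\<^sub>R v) * c)"
    using MVT2[of 0 1 "\<lambda>s. \<phi> (y + (c * s) *\<^sub>R v)" "\<lambda>s. pd [v] \<phi> (y + (c * s) *\<^sub>R v) * c",
        OF zero_less_one] d by blast
  with \<open>v \<in> Basis\<close> show ?thesis
    by (intro that[of "y + (c * s) *\<^sub>R v"]) (auto simp: dist_norm abs_mult mult_left_le)
qed

lemma mean_value_basis_sum:
  fixes \<phi> :: "'a::euclidean_space \<Rightarrow> real"
  assumes "finite B" "B \<subseteq> Basis"
    and diff: "\<And>v x. v \<in> Basis \<Longrightarrow> (\<lambda>s. \<phi> (x + s *\<^sub>R v)) differentiable (at 0)"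
  shows "\<exists>\<xi>. (\<forall>i\<in>B. dist (\<xi> i) y \<le> (\<Sum>j\<in>B. \<bar>c j\<bar>)) \<and>
    \<phi> (y + (\<Sum>i\<in>B. c i *\<^sub>R i)) - \<phi> y = (\<Sum>i\<in>B. c i * pd [i] \<phi> (\<xi> i))"
  using assms(1,2)
proof (induction B arbitrary: y rule: finite_induct)
  case (insert a B)
  then have "a \<in> Basis" by simp
  then obtain z where z: "dist z y \<le> \<bar>c a\<bar>" "\<phi> (y + c a *\<^sub>R a) - \<phi> y = c a * pd [a] \<phi> z"
    using mean_value_along_basis[OF diff] by blast
  define y' where "y' = y + c a *\<^sub>R a"
  obtain \<xi> where \<xi>: "\<forall>i\<in>B. dist (\<xi> i) y' \<le> (\<Sum>j\<in>B. \<bar>c j\<bar>)"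
    "\<phi> (y' + (\<Sum>i\<in>B. c i *\<^sub>R i)) - \<phi> y' = (\<Sum>i\<in>B. c i * pd [i] \<phi> (\<xi> i))"
    using insert by blast
  have "dist y' y = \<bar>c a\<bar>" using \<open>a \<in> Basis\<close> by (simp add: y'_def dist_norm)
  then have "dist (\<xi> i) y \<le> \<bar>c a\<bar> + (\<Sum>j\<in>B. \<bar>c j\<bar>)" if "i \<in> B" for i
    using \<xi>(1) that dist_triangle[of "\<xi> i" y y'] by fastforce
  moreover have "dist z y \<le> \<bar>c a\<bar> + (\<Sum>j\<in>B. \<bar>c j\<bar>)"
    using z(1) by (simp add: add_increasing2 sum_nonneg)
  moreover have "\<phi> (y + (\<Sum>i\<in>insert a B. c i *\<^sub>R i)) - \<phi> y
      = (\<Sum>i\<in>insert a B. c i * pd [i] \<phi> ((\<xi>(a := z)) i))"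
  proof -
    have "(\<Sum>i\<in>B. c i * pd [i] \<phi> ((\<xi>(a := z)) i)) = (\<Sum>i\<in>B. c i * pd [i] \<phi> (\<xi> i))"
      using insert by (intro sum.cong) auto
    then have "(\<Sum>i\<in>insert a B. c i * pd [i] \<phi> ((\<xi>(a := z)) i))
        = c a * pd [a] \<phi> z + (\<Sum>i\<in>B. c i * pd [i] \<phi> (\<xi> i))"
      using insert by (simp del: pd.simps)
    moreover have "y + (\<Sum>i\<in>insert a B. c i *\<^sub>R i) = y' + (\<Sum>i\<in>B. c i *\<^sub>R i)"
      using insert by (simp add: y'_def algebra_simps)
    moreover have "\<phi> y' - \<phi> y = c a * pd [a] \<phi> z" using z(2) by (simp only: y'_def)
    ultimately show ?thesis using \<xi>(2) by (simp del: pd.simps)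
  qed
  ultimately show ?case using insert.hyps by (intro exI[of _ "\<xi>(a := z)"]) (auto simp del: pd.simps)
qed simp

lemma grad_linearization_error_le:
  fixes \<phi> :: "'a::euclidean_space \<Rightarrow> real" and \<eta> :: real
  assumes C1: "Ck_on 1 UNIV \<phi>" and "0 \<le> \<eta>"
    and close: "\<And>z i. dist z x \<le> DIM('a) * norm (y - x) \<Longrightarrow> i \<in> Basis
      \<Longrightarrow> \<bar>pd [i] \<phi> z - pd [i] \<phi> x\<bar> \<le> \<eta>"
  shows "\<bar>\<phi> y - \<phi> x - grad \<phi> x \<bullet> (y - x)\<bar> \<le> DIM('a) * \<eta> * norm (y - x)"
proof -
  define c where "c i = (y - x) \<bullet> i" for i
  have diff: "\<And>v x. v \<in> Basis \<Longrightarrow> (\<lambda>s. \<phi> (x + s *\<^sub>R v)) differentiable (at 0)"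
    using Ck_on_pd_differentiable_along[OF C1, of "[]"] by simp
  obtain \<xi> where \<xi>_near: "\<forall>i\<in>Basis. dist (\<xi> i) x \<le> (\<Sum>j\<in>Basis. \<bar>c j\<bar>)"
    and \<xi>_mvt: "\<phi> (x + (\<Sum>i\<in>Basis. c i *\<^sub>R i)) - \<phi> x = (\<Sum>i\<in>Basis. c i * pd [i] \<phi> (\<xi> i))"
    using mean_value_basis_sum[OF finite_Basis order_refl diff] by blast
  have "(\<Sum>j\<in>Basis. \<bar>c j\<bar>) \<le> (\<Sum>j\<in>(Basis::'a set). norm (y - x))"
    unfolding c_def by (intro sum_mono Basis_le_norm)
  then have sum_c: "(\<Sum>j\<in>Basis. \<bar>c j\<bar>) \<le> DIM('a) * norm (y - x)"
    by simp
  have "x + (\<Sum>i\<in>Basis. c i *\<^sub>R i) = y"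
    by (simp add: c_def euclidean_representation)
  moreover have "grad \<phi> x \<bullet> (y - x) = (\<Sum>i\<in>Basis. c i * pd [i] \<phi> x)"
    unfolding grad_def c_def inner_sum_left
    by (rule sum.cong) (simp_all add: inner_commute mult.commute del: pd.simps)
  ultimately have "\<phi> y - \<phi> x - grad \<phi> x \<bullet> (y - x) = (\<Sum>i\<in>Basis. c i * (pd [i] \<phi> (\<xi> i) - pd [i] \<phi> x))"
    using \<xi>_mvt by (simp add: right_diff_distrib sum_subtractf del: pd.simps)
  also have "\<bar>\<dots>\<bar> \<le> (\<Sum>i\<in>Basis. \<bar>c i\<bar> * \<eta>)"
  proof (rule order_trans[OF sum_abs sum_mono])
    fix i :: 'a assume "i \<in> Basis"
    with \<xi>_near sum_c have "dist (\<xi> i) x \<le> DIM('a) * norm (y - x)" by fastforce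
    with \<open>i \<in> Basis\<close> show "\<bar>c i * (pd [i] \<phi> (\<xi> i) - pd [i] \<phi> x)\<bar> \<le> \<bar>c i\<bar> * \<eta>"
      unfolding abs_mult using close by (intro mult_left_mono) auto
  qed
  also have "\<dots> = (\<Sum>i\<in>Basis. \<bar>c i\<bar>) * \<eta>"
    by (rule sum_distrib_right[symmetric])
  also have "\<dots> \<le> (DIM('a) * norm (y - x)) * \<eta>"
    using sum_c \<open>0 \<le> \<eta>\<close> by (rule mult_right_mono)
  also have "\<dots> = DIM('a) * \<eta> * norm (y - x)"
    by (simp add: mult_ac)
  finally show ?thesis .
qed

lemma Ck_on_1_has_derivative_grad:
  fixes \<phi> :: "'a::euclidean_space \<Rightarrow> real"
  assumes C1: "Ck_on 1 UNIV \<phi>"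
  shows "(\<phi> has_derivative (\<lambda>y. grad \<phi> x \<bullet> y)) (at x)"
  unfolding has_derivative_at_alt
proof (intro conjI allI impI bounded_linear_inner_right)
  fix e :: real assume "0 < e"
  define N where "N = real DIM('a)"
  have "0 < N" by (simp add: N_def)
  have "\<forall>\<^sub>F z in at x. \<forall>i\<in>Basis. \<bar>pd [i] \<phi> z - pd [i] \<phi> x\<bar> < e / N"
  proof (intro eventually_ball_finite ballI finite_Basis)
    fix i :: 'a assume "i \<in> Basis"
    then have "isCont (pd [i] \<phi>) x"
      using Ck_on_pd_continuous_on[OF C1, of "[i]"] by (simp add: continuous_on_eq_continuous_at)
    then show "\<forall>\<^sub>F z in at x. \<bar>pd [i] \<phi> z - pd [i] \<phi> x\<bar> < e / N"
      using tendstoD[of "pd [i] \<phi>" _ "at x" "e / N"] \<open>0 < e\<close> \<open>0 < N\<close>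
      by (simp add: isCont_def dist_real_def)
  qed
  then obtain \<delta> where "0 < \<delta>"
    and \<delta>: "\<And>z. z \<noteq> x \<Longrightarrow> dist z x < \<delta> \<Longrightarrow> \<forall>i\<in>Basis. \<bar>pd [i] \<phi> z - pd [i] \<phi> x\<bar> < e / N"
    unfolding eventually_at by auto
  show "\<exists>d>0. \<forall>y. norm (y - x) < d \<longrightarrow> norm (\<phi> y - \<phi> x - grad \<phi> x \<bullet> (y - x)) \<le> e * norm (y - x)"
  proof (intro exI[of _ "\<delta> / N"] conjI allI impI)
    fix y assume y: "norm (y - x) < \<delta> / N"
    have close: "\<bar>pd [i] \<phi> z - pd [i] \<phi> x\<bar> \<le> e / N"
      if "dist z x \<le> N * norm (y - x)" "i \<in> Basis" for z i
    proof -
      have "dist z x < \<delta>" using that y \<open>0 < N\<close> by (simp add: field_simps)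
      then show ?thesis using \<delta>[of z] that \<open>0 < e\<close> \<open>0 < N\<close> by (cases "z = x") auto
    qed
    have "0 \<le> e / N" using \<open>0 < e\<close> \<open>0 < N\<close> by simp
    from grad_linearization_error_le[OF C1 this[unfolded N_def] close[unfolded N_def]] \<open>0 < N\<close>
    show "norm (\<phi> y - \<phi> x - grad \<phi> x \<bullet> (y - x)) \<le> e * norm (y - x)"
      by (simp add: N_def)
  qed (use \<open>0 < \<delta>\<close> \<open>0 < N\<close> in simp)
qed

lemma defining_function_frontier:
  assumes df: "defining_function \<Omega> \<phi>" and "x \<in> frontier \<Omega>"
  shows "\<phi> x = 0"
proof -
  have cont: "continuous_on UNIV \<phi>" and \<Omega>: "\<Omega> = {x. \<phi> x < 0}"
    using df Ck_on_pd_continuous_on[of 0 UNIV \<phi> "[]"]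
    unfolding defining_function_def smooth_on_def by auto
  have "open \<Omega>" unfolding \<Omega> by (rule open_Collect_less[OF cont continuous_on_const])
  then have "\<not> \<phi> x < 0" using \<open>x \<in> frontier \<Omega>\<close> \<Omega> by (simp add: frontier_def interior_open)
  moreover have "closure \<Omega> \<subseteq> {x. \<phi> x \<le> 0}"
    by (rule closure_minimal) (use \<Omega> closed_Collect_le[OF cont continuous_on_const] in auto)
  then have "\<phi> x \<le> 0" using \<open>x \<in> frontier \<Omega>\<close> by (auto simp: frontier_def)
  ultimately show ?thesis by simp
qed

lemma defining_function_inward:
  assumes df: "defining_function \<Omega> \<phi>" and x: "x \<in> frontier \<Omega>"
  shows "\<forall>\<^sub>F h in at_right 0. x - h *\<^sub>R (grad \<phi> x /\<^sub>R norm (grad \<phi> x)) \<in> \<Omega>"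
proof -
  define n where "n = grad \<phi> x /\<^sub>R norm (grad \<phi> x)"
  have \<Omega>: "\<Omega> = {x. \<phi> x < 0}" and "Ck_on 1 UNIV \<phi>" and "grad \<phi> x \<noteq> 0"
    using df defining_function_frontier[OF df x]
    unfolding defining_function_def smooth_on_def by auto
  have "(\<phi> has_derivative (\<lambda>y. grad \<phi> x \<bullet> y)) (at (x - 0 *\<^sub>R n))"
    using Ck_on_1_has_derivative_grad[OF \<open>Ck_on 1 UNIV \<phi>\<close>] by simp
  then have "((\<lambda>h. \<phi> (x - h *\<^sub>R n)) has_derivative (\<lambda>h. grad \<phi> x \<bullet> (- (h *\<^sub>R n)))) (at 0)"
    by (rule has_derivative_compose[of "\<lambda>h. x - h *\<^sub>R n", rotated]) (auto intro!: derivative_eq_intros)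
  moreover have "(\<lambda>h. grad \<phi> x \<bullet> (- (h *\<^sub>R n))) = (*) (- norm (grad \<phi> x))"
    using \<open>grad \<phi> x \<noteq> 0\<close>
    by (simp add: n_def fun_eq_iff field_simps flip: power2_norm_eq_inner) (simp add: power2_eq_square)
  ultimately have "((\<lambda>h. \<phi> (x - h *\<^sub>R n)) has_real_derivative - norm (grad \<phi> x)) (at 0)"
    by (simp add: has_field_derivative_def)
  moreover have "- norm (grad \<phi> x) < 0" using \<open>grad \<phi> x \<noteq> 0\<close> by simp
  ultimately obtain d where "0 < d"
    and dec: "\<forall>h>0. h < d \<longrightarrow> \<phi> (x - (0 + h) *\<^sub>R n) < \<phi> (x - 0 *\<^sub>R n)"
    using DERIV_neg_dec_right by blast
  show ?thesis
    unfolding eventually_at_right_field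
  proof (intro exI[of _ d] conjI allI impI)
    fix h :: real assume "0 < h" "h < d"
    then have "\<phi> (x - h *\<^sub>R n) < 0" using dec defining_function_frontier[OF df x] by simp
    then show "x - h *\<^sub>R (grad \<phi> x /\<^sub>R norm (grad \<phi> x)) \<in> \<Omega>" by (simp add: \<Omega> n_def)
  qed fact
qed

lemma normal_derivative_nonpos_at_min:
  assumes "\<exists>\<phi>. defining_function \<Omega> \<phi>" "x \<in> frontier \<Omega>"
    and min: "\<And>y. y \<in> \<Omega> \<Longrightarrow> w x \<le> w y" and D: "has_normal_derivative \<Omega> w x D"
  shows "D \<le> 0"
proof -
  define \<phi> where "\<phi> = (SOME \<phi>. defining_function \<Omega> \<phi>)"
  have "defining_function \<Omega> \<phi>" unfolding \<phi>_def using assms(1) by (rule someI_ex)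
  then have "\<forall>\<^sub>F h in at_right 0. x - h *\<^sub>R outward_normal \<Omega> x \<in> \<Omega>"
    unfolding outward_normal_def Let_def \<phi>_def[symmetric] by (rule defining_function_inward[OF _ assms(2)])
  then have "\<forall>\<^sub>F h in at_right 0. (w x - w (x - h *\<^sub>R outward_normal \<Omega> x)) / h \<le> 0"
    using eventually_at_right_less[of 0]
    by eventually_elim (auto intro!: divide_nonpos_pos dest: min)
  with D show ?thesis
    unfolding has_normal_derivative_def by (auto intro: tendsto_upperbound)
qed

section \<open>Maximum principle\<close>

lemma classical_solution_no_interior_min:
  assumes "open \<Omega>" "0 < \<alpha>" "\<alpha> < 1" "0 < \<epsilon>"
    and sol: "classical_solution \<Omega> T \<alpha> lam f g b u0 u"
    and x: "x \<in> \<Omega>" and t: "t \<in> {0<..T}" and F: "0 \<le> f x * g t"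
    and min: "\<And>y s. y \<in> closure \<Omega> \<Longrightarrow> s \<in> {0..T} \<Longrightarrow> u x t + \<epsilon> * t \<le> u y s + \<epsilon> * s"
  shows False
proof -
  obtain v' where der: "\<And>s. s \<in> {0<..T} \<Longrightarrow> (u x has_real_derivative v' s) (at s within {0<..T})"
    and cont: "continuous_on {0<..T} v'" and int: "set_integrable lborel {0<..<T} (deriv (u x))"
    using sol x unfolding classical_solution_def by blast
  have "x \<in> closure \<Omega>" using x closure_subset by blast
  then have "u x t + \<epsilon> * (t - \<tau>) \<le> u x \<tau>" if "\<tau> \<in> {0<..<t}" for \<tau>
    using min[of x \<tau>] that t by (simp add: algebra_simps)
  then have "caputo \<alpha> (u x) t < 0"
    using t by (intro caputo_neg_at_strict_past_minimum[OF \<open>0 < \<alpha>\<close> \<open>\<alpha> < 1\<close> _ _ \<open>0 < \<epsilon>\<close> der cont int]) auto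
  moreover have "0 \<le> laplacian (\<lambda>y. u y t) x"
  proof (rule laplacian_nonneg_at_min[OF \<open>open \<Omega>\<close> x])
    show "Ck_on 2 \<Omega> (\<lambda>y. u y t)" using sol t unfolding classical_solution_def by blast
    show "u x t \<le> u y t" if "y \<in> \<Omega>" for y
      using min[of y t] that t closure_subset by auto
  qed
  moreover have "caputo \<alpha> (u x) t - laplacian (\<lambda>y. u y t) x = f x * g t"
    using sol x t unfolding classical_solution_def by blast
  ultimately show False using F by linarith
qed

lemma classical_solution_boundary_min_nonneg:
  assumes "\<exists>\<phi>. defining_function \<Omega> \<phi>"
    and sol: "classical_solution \<Omega> T \<alpha> lam f g b u0 u"
    and x: "x \<in> frontier \<Omega>" and t: "t \<in> {0<..T}" and "0 < lam x" "0 \<le> b x t"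
    and min: "\<And>y. y \<in> \<Omega> \<Longrightarrow> u x t \<le> u y t"
  shows "0 \<le> u x t"
proof -
  obtain D where D: "has_normal_derivative \<Omega> (\<lambda>y. u y t) x D" "D + lam x * u x t = b x t"
    using sol x t unfolding classical_solution_def by blast
  have "D \<le> 0"
    by (rule normal_derivative_nonpos_at_min[OF assms(1) x _ D(1)]) (use min in auto)
  with D(2) have "0 \<le> lam x * u x t" using \<open>0 \<le> b x t\<close> by linarith
  with \<open>0 < lam x\<close> show ?thesis by (simp add: zero_le_mult_iff)
qed

lemma classical_solution_min_nonneg:
  assumes "open \<Omega>" "\<exists>\<phi>. defining_function \<Omega> \<phi>" "0 < \<alpha>" "\<alpha> < 1" "0 < \<epsilon>"
    and lam_pos: "\<forall>x\<in>frontier \<Omega>. 0 < lam x"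
    and u0_nonneg: "\<forall>x\<in>closure \<Omega>. 0 \<le> u0 x"
    and F_nonneg: "\<forall>x\<in>\<Omega>. \<forall>t\<in>{0<..T}. 0 \<le> f x * g t"
    and b_nonneg: "\<forall>x\<in>frontier \<Omega>. \<forall>t\<in>{0<..T}. 0 \<le> b x t"
    and sol: "classical_solution \<Omega> T \<alpha> lam f g b u0 u"
    and x: "x \<in> closure \<Omega>" and t: "t \<in> {0..T}"
    and min: "\<And>y s. y \<in> closure \<Omega> \<Longrightarrow> s \<in> {0..T} \<Longrightarrow> u x t + \<epsilon> * t \<le> u y s + \<epsilon> * s"
  shows "0 \<le> u x t"
proof (cases "t = 0")
  case True
  then show ?thesis using sol x u0_nonneg unfolding classical_solution_def by auto
next
  case False
  with t have t': "t \<in> {0<..T}" by auto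
  have "x \<notin> \<Omega>"
  proof
    assume "x \<in> \<Omega>"
    with F_nonneg t' have "0 \<le> f x * g t" by blast
    from classical_solution_no_interior_min[OF \<open>open \<Omega>\<close> \<open>0 < \<alpha>\<close> \<open>\<alpha> < 1\<close> \<open>0 < \<epsilon>\<close> sol
        \<open>x \<in> \<Omega>\<close> t' this min]
    show False .
  qed
  with x \<open>open \<Omega>\<close> have "x \<in> frontier \<Omega>" by (simp add: frontier_def interior_open)
  moreover have "u x t \<le> u y t" if "y \<in> \<Omega>" for y
    using min[of y t] that t closure_subset by auto
  ultimately show ?thesis
    using classical_solution_boundary_min_nonneg[OF \<open>\<exists>\<phi>. _\<close> sol _ t'] lam_pos b_nonneg t'
    by blast
qed

lemma classical_solution_perturbed_nonneg:
  assumes dom: "smooth_bounded_domain \<Omega>" and "0 < \<alpha>" "\<alpha> < 1" "0 < \<epsilon>"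
    and lam_pos: "\<forall>x\<in>frontier \<Omega>. 0 < lam x"
    and u0_nonneg: "\<forall>x\<in>closure \<Omega>. 0 \<le> u0 x"
    and F_nonneg: "\<forall>x\<in>\<Omega>. \<forall>t\<in>{0<..T}. 0 \<le> f x * g t"
    and b_nonneg: "\<forall>x\<in>frontier \<Omega>. \<forall>t\<in>{0<..T}. 0 \<le> b x t"
    and sol: "classical_solution \<Omega> T \<alpha> lam f g b u0 u"
    and x: "x \<in> closure \<Omega>" and t: "t \<in> {0..T}"
  shows "0 \<le> u x t + \<epsilon> * t"
proof -
  have "open \<Omega>" "bounded \<Omega>" "\<exists>\<phi>. defining_function \<Omega> \<phi>"
    using dom unfolding smooth_bounded_domain_def by auto
  define K where "K = closure \<Omega> \<times> {0..T}"
  have "continuous_on K (\<lambda>(y, s). u y s)"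
    using sol unfolding classical_solution_def K_def by blast
  then have "continuous_on K (\<lambda>p. (\<lambda>(y, s). u y s) p + \<epsilon> * snd p)"
    by (intro continuous_intros)
  then have "continuous_on K (\<lambda>(y, s). u y s + \<epsilon> * s)"
    by (simp add: case_prod_unfold)
  moreover have "compact K"
    unfolding K_def using \<open>bounded \<Omega>\<close> by (simp add: compact_Times compact_closure)
  moreover have "K \<noteq> {}" using x t by (auto simp: K_def)
  ultimately obtain x0 t0 where "(x0, t0) \<in> K"
    and "\<forall>p\<in>K. (\<lambda>(y, s). u y s + \<epsilon> * s) (x0, t0) \<le> (\<lambda>(y, s). u y s + \<epsilon> * s) p"
    using continuous_attains_inf[of K "\<lambda>(y, s). u y s + \<epsilon> * s"] by auto
  then have x0: "x0 \<in> closure \<Omega>" and t0: "t0 \<in> {0..T}"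
    and min: "\<And>y s. y \<in> closure \<Omega> \<Longrightarrow> s \<in> {0..T} \<Longrightarrow> u x0 t0 + \<epsilon> * t0 \<le> u y s + \<epsilon> * s"
    unfolding K_def by auto
  have "0 \<le> u x0 t0"
    by (rule classical_solution_min_nonneg[OF \<open>open \<Omega>\<close> \<open>\<exists>\<phi>. _\<close> assms(2-9) x0 t0 min])
  moreover have "u x0 t0 + \<epsilon> * t0 \<le> u x t + \<epsilon> * t" by (rule min[OF x t])
  moreover have "0 \<le> \<epsilon> * t0" using t0 \<open>0 < \<epsilon>\<close> by simp
  ultimately show ?thesis by linarith
qed

theorem theorem4p2:
  fixes \<Omega> :: "'a::euclidean_space set"
    and T \<alpha> lam_minus lam_plus :: real
    and lam u0 f :: "'a \<Rightarrow> real"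
    and g :: "real \<Rightarrow> real"
    and b u :: "'a \<Rightarrow> real \<Rightarrow> real"
    and \<mu> :: "nat \<Rightarrow> real" and \<psi> :: "nat \<Rightarrow> 'a \<Rightarrow> real"
  assumes dom: "smooth_bounded_domain \<Omega>"
    and T: "T > 0"
    and alpha: "0 < \<alpha>" "\<alpha> < 1"
    and lam_bounds: "0 < lam_minus" "\<forall>x\<in>frontier \<Omega>. lam_minus < lam x \<and> lam x \<le> lam_plus"
    and eig: "robin_eigensystem \<Omega> lam \<mu> \<psi>"
    and u0_reg: "frac_domain \<Omega> \<mu> \<psi> 3 u0"
    and g_reg: "C1_closed_interval T g"
    and f_reg: "frac_domain \<Omega> \<mu> \<psi> 2 f"
    and u0_nonneg: "\<forall>x\<in>closure \<Omega>. u0 x \<ge> 0"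
    and F_nonneg: "\<forall>x\<in>\<Omega>. \<forall>t\<in>{0..T}. f x * g t \<ge> 0"
    and b_nonneg: "\<forall>x\<in>frontier \<Omega>. \<forall>t\<in>{0..T}. b x t \<ge> 0"
    and sol: "classical_solution \<Omega> T \<alpha> lam f g b u0 u"
  shows "\<forall>x\<in>closure \<Omega>. \<forall>t\<in>{0..T}. u x t \<ge> 0"
proof (intro ballI)
  \<comment> \<open>The eigensystem, the regularity of \<open>u0\<close>, \<open>f\<close>, \<open>g\<close> and the bound \<open>lam_plus\<close> serve
    the existence theory only; the maximum principle needs just the classical solution.\<close>
  fix x t assume x: "x \<in> closure \<Omega>" and t: "t \<in> {0..T}"
  have "\<forall>x\<in>frontier \<Omega>. 0 < lam x" using lam_bounds by force
  then have perturbed: "0 \<le> u x t + \<epsilon> * t" if "0 < \<epsilon>" for \<epsilon>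
    by (rule classical_solution_perturbed_nonneg[OF dom alpha that _ u0_nonneg _ _ sol x t])
      (use F_nonneg b_nonneg in auto)
  show "0 \<le> u x t"
  proof (rule field_le_epsilon)
    fix e :: real assume "0 < e"
    then have "0 \<le> u x t + e / (t + 1) * t" using t by (intro perturbed) simp
    moreover have "e / (t + 1) * t \<le> e" using \<open>0 < e\<close> t by (simp add: field_simps)
    ultimately show "0 \<le> u x t + e" by linarith
  qed
qed

end
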